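(* Let $W$ be an NDCSE with respect to a closed abelian subgroup $H\subseteq G$. Then $\mathcal A_W=\mathcal T_H\circ\mathcal P_D$, where $\mathcal T_H(X)=\int_H R(h)XR(h)^\dagger\,dh$ (normalized Haar measure on $H$) and $\mathcal P_D$ is the Hilbert–Schmidt orthogonal projector onto $\mathcal L^{\mathcal D}$.
   Context: Standing setting: $G$ compact group with normalized Haar measure, $R:G\to\mathsf U(\mathcal H)$ a continuous unitary representation on a finite-dimensional Hilbert space $\mathcal H$; $\mathcal L=\mathrm{End}(\mathcal H)$ with Hilbert–Schmidt inner product. For an orthonormal basis $W$ of $\mathcal H$, $\mathcal A_W(X)=\sum_{w\in W}\langle w|X|w\rangle|w\rangle\langle w|$. A Fourier basis (FB) is an orthonormal basis $W$ with a decomposition $\mathcal H=\bigoplus_{\eta,i}\mathcal H^{\eta,i}$ into irreducible $G$-submodules such that $W=\bigcup W^{\eta,i}$ with $W^{\eta,i}$ an orthonormal basis of $\mathcal H^{\eta,i}$; $\mathcal L^{\mathcal D}=\bigoplus_{\eta,i}\mathrm{End}(\mathcal H^{\eta,i})$. A commuting subgroup eigenbasis (CSE) with respect to an abelian subgroup $H\subseteq G$ is an FB each of whose elements is a simultaneous eigenvector of all $R(h)$, $h\in H$; it is non-degenerate (NDCSE) if for every $(\eta,i)$ the restriction of $\mathcal H^{\eta,i}$ to $H$ is multiplicity-free (equivalently, distinct elements of $W^{\eta,i}$ carry distinct characters of $H$). *)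

theory Defs
  imports "HOL-Probability.Probability" "HOL-Algebra.Group"
begin

definition cinner :: "complex ^ 'n \<Rightarrow> complex ^ 'n \<Rightarrow> complex" where
  "cinner v w = (\<Sum>i\<in>UNIV. cnj (v $ i) * w $ i)"

definition adj :: "complex ^ 'n ^ 'm \<Rightarrow> complex ^ 'm ^ 'n" where
  "adj A = (\<chi> i j. cnj (A $ j $ i))"

definition outer :: "complex ^ 'n \<Rightarrow> complex ^ 'n \<Rightarrow> complex ^ 'n ^ 'n" where
  "outer v w = (\<chi> i j. v $ i * cnj (w $ j))"

text \<open>Hilbert-Schmidt inner product  tr(X^dagger Y)\<close>
definition hs_inner :: "complex ^ 'n ^ 'n \<Rightarrow> complex ^ 'n ^ 'n \<Rightarrow> complex" where
  "hs_inner X Y = (\<Sum>i\<in>UNIV. \<Sum>j\<in>UNIV. cnj (X $ i $ j) * Y $ i $ j)"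

definition orthonormal_basis :: "(complex ^ 'n) set \<Rightarrow> bool" where
  "orthonormal_basis W \<longleftrightarrow> finite W \<and> card W = CARD('n) \<and>
     (\<forall>v\<in>W. \<forall>w\<in>W. cinner v w = (if v = w then 1 else 0))"

definition csubspace :: "(complex ^ 'n) set \<Rightarrow> bool" where
  "csubspace S \<longleftrightarrow> 0 \<in> S \<and> (\<forall>x\<in>S. \<forall>y\<in>S. x + y \<in> S) \<and> (\<forall>c. \<forall>x\<in>S. c *s x \<in> S)"

definition cspan :: "(complex ^ 'n) set \<Rightarrow> (complex ^ 'n) set" where
  "cspan A = {v. \<exists>c. v = (\<Sum>w\<in>A. c w *s w)}"

definition invariant_under :: "('g, 'b) monoid_scheme \<Rightarrow> ('g \<Rightarrow> complex ^ 'n ^ 'n) \<Rightarrow> (complex ^ 'n) set \<Rightarrow> bool" where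
  "invariant_under G R S \<longleftrightarrow> (\<forall>g\<in>carrier G. \<forall>v\<in>S. R g *v v \<in> S)"

definition irreducible_submodule :: "('g, 'b) monoid_scheme \<Rightarrow> ('g \<Rightarrow> complex ^ 'n ^ 'n) \<Rightarrow> (complex ^ 'n) set \<Rightarrow> bool" where
  "irreducible_submodule G R S \<longleftrightarrow> csubspace S \<and> invariant_under G R S \<and> S \<noteq> {0} \<and>
     (\<forall>V. csubspace V \<and> V \<subseteq> S \<and> invariant_under G R V \<longrightarrow> V = {0} \<or> V = S)"

definition compact_group :: "('g, 'b) monoid_scheme \<Rightarrow> 'g topology \<Rightarrow> bool" where
  "compact_group G T \<longleftrightarrow> group G \<and> topspace T = carrier G \<and> compact_space T \<and> Hausdorff_space T \<and>
     continuous_map (prod_topology T T) T (\<lambda>(x, y). x \<otimes>\<^bsub>G\<^esub> y) \<and>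
     continuous_map T T (\<lambda>x. inv\<^bsub>G\<^esub> x)"

definition unitary :: "complex ^ 'n ^ 'n \<Rightarrow> bool" where
  "unitary U \<longleftrightarrow> U ** adj U = mat 1 \<and> adj U ** U = mat 1"

definition cont_unitary_rep :: "('g, 'b) monoid_scheme \<Rightarrow> 'g topology \<Rightarrow> ('g \<Rightarrow> complex ^ 'n ^ 'n) \<Rightarrow> bool" where
  "cont_unitary_rep G T R \<longleftrightarrow>
     (\<forall>g\<in>carrier G. unitary (R g)) \<and>
     (\<forall>g\<in>carrier G. \<forall>g'\<in>carrier G. R (g \<otimes>\<^bsub>G\<^esub> g') = R g ** R g') \<and>
     (\<forall>i j. continuous_map T euclidean (\<lambda>g. R g $ i $ j))"

text \<open>Ws: the decomposition of W into orthonormal bases W^{eta,i} of irreducible submodules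
  H^{eta,i} = span W^{eta,i}.\<close>
definition fourier_basis :: "('g, 'b) monoid_scheme \<Rightarrow> ('g \<Rightarrow> complex ^ 'n ^ 'n) \<Rightarrow> (complex ^ 'n) set \<Rightarrow> (complex ^ 'n) set set \<Rightarrow> bool" where
  "fourier_basis G R W Ws \<longleftrightarrow> orthonormal_basis W \<and> \<Union>Ws = W \<and> {} \<notin> Ws \<and>
     (\<forall>A\<in>Ws. \<forall>B\<in>Ws. A \<noteq> B \<longrightarrow> A \<inter> B = {}) \<and>
     (\<forall>A\<in>Ws. irreducible_submodule G R (cspan A))"

definition carries_char :: "('g \<Rightarrow> complex ^ 'n ^ 'n) \<Rightarrow> 'g set \<Rightarrow> complex ^ 'n \<Rightarrow> ('g \<Rightarrow> complex) \<Rightarrow> bool" where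
  "carries_char R H w c \<longleftrightarrow> (\<forall>h\<in>H. R h *v w = c h *s w)"

definition NDCSE :: "('g, 'b) monoid_scheme \<Rightarrow> ('g \<Rightarrow> complex ^ 'n ^ 'n) \<Rightarrow> 'g set \<Rightarrow> (complex ^ 'n) set \<Rightarrow> (complex ^ 'n) set set \<Rightarrow> bool" where
  "NDCSE G R H W Ws \<longleftrightarrow> fourier_basis G R W Ws \<and>
     (\<forall>w\<in>W. \<exists>c. carries_char R H w c) \<and>
     (\<forall>A\<in>Ws. \<forall>w\<in>A. \<forall>w'\<in>A. w \<noteq> w' \<longrightarrow> \<not> (\<exists>c. carries_char R H w c \<and> carries_char R H w' c))"

definition top_borel_sets :: "'a topology \<Rightarrow> 'a set set" where
  "top_borel_sets T = sigma_sets (topspace T) {U. openin T U}"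

definition normalized_haar :: "('g, 'b) monoid_scheme \<Rightarrow> 'g topology \<Rightarrow> 'g set \<Rightarrow> 'g measure \<Rightarrow> bool" where
  "normalized_haar G T H M \<longleftrightarrow> prob_space M \<and> space M = H \<and>
     sets M = top_borel_sets (subtopology T H) \<and>
     (\<forall>h\<in>H. \<forall>A\<in>sets M. emeasure M ((\<lambda>x. h \<otimes>\<^bsub>G\<^esub> x) ` A) = emeasure M A)"

definition A_W :: "(complex ^ 'n) set \<Rightarrow> complex ^ 'n ^ 'n \<Rightarrow> complex ^ 'n ^ 'n" where
  "A_W W X = (\<Sum>w\<in>W. (\<chi> i j. cinner w (X *v w) * outer w w $ i $ j))"

definition T_H :: "'g measure \<Rightarrow> ('g \<Rightarrow> complex ^ 'n ^ 'n) \<Rightarrow> complex ^ 'n ^ 'n \<Rightarrow> complex ^ 'n ^ 'n" where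
  "T_H M R X = (\<chi> i j. integral\<^sup>L M (\<lambda>h. (R h ** X ** adj (R h)) $ i $ j))"

definition proj_onto :: "(complex ^ 'n) set \<Rightarrow> complex ^ 'n ^ 'n" where
  "proj_onto A = (\<Sum>w\<in>A. outer w w)"

text \<open>L^D = direct sum of End(H^{eta,i}), each embedded as the operators Y with P Y P = Y\<close>
definition L_D :: "(complex ^ 'n) set set \<Rightarrow> (complex ^ 'n ^ 'n) set" where
  "L_D Ws = {(\<Sum>A\<in>Ws. Y A) | Y. \<forall>A\<in>Ws. proj_onto A ** Y A ** proj_onto A = Y A}"

definition hs_orth_proj :: "(complex ^ 'n ^ 'n) set \<Rightarrow> complex ^ 'n ^ 'n \<Rightarrow> complex ^ 'n ^ 'n" where
  "hs_orth_proj L X = (THE Y. Y \<in> L \<and> (\<forall>Z\<in>L. hs_inner Z (X - Y) = 0))"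

end

theory Submission
  imports Defs
begin

text \<open>In the basis \<open>W\<close>, \<open>\<A>\<^sub>W\<close> keeps the diagonal entries \<open>\<langle>w|X|w\<rangle>\<close> of \<open>X\<close>, and
  \<open>\<P>\<^sub>D\<close> keeps the entries \<open>\<langle>u|X|v\<rangle>\<close> with \<open>u, v\<close> in a common block \<open>W\<^sup>\<eta>\<^sup>,\<^sup>i\<close>, i.e.
  \<open>\<P>\<^sub>D X = \<Sum>\<^sub>A P\<^sub>A X P\<^sub>A\<close>. For \<open>h \<in> H\<close>, conjugation by \<open>R(h)\<close> multiplies \<open>\<langle>u|X|v\<rangle>\<close> by
  \<open>\<chi>\<^sub>u(h) \<chi>\<^sub>v(h)\<^sup>*\<close>, a continuous character of \<open>H\<close>, so \<open>\<T>\<^sub>H\<close> multiplies it by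
  \<open>\<integral>\<^sub>H \<chi>\<^sub>u \<chi>\<^sub>v\<^sup>*\<close>, which by invariance of the Haar measure is \<open>1\<close> if \<open>\<chi>\<^sub>u = \<chi>\<^sub>v\<close> and \<open>0\<close>
  otherwise. Non-degeneracy says that within a block \<open>\<chi>\<^sub>u = \<chi>\<^sub>v\<close> only for \<open>u = v\<close>, so
  \<open>\<T>\<^sub>H \<circ> \<P>\<^sub>D\<close> keeps exactly the diagonal.\<close>

lemma cinner_scale_right: "cinner u (c *s v) = c * cinner u v"
  by (simp add: cinner_def sum_distrib_left mult_ac)

lemma cinner_scale_left: "cinner (c *s u) v = cnj c * cinner u v"
  by (simp add: cinner_def sum_distrib_left mult_ac)

lemma cinner_adj: "cinner u (A *v v) = cinner (adj A *v u) v"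
proof -
  have "cinner u (A *v v) = (\<Sum>i\<in>UNIV. \<Sum>j\<in>UNIV. cnj (u $ i) * A $ i $ j * v $ j)"
    unfolding cinner_def matrix_vector_mult_def by (simp add: sum_distrib_left mult.assoc)
  also have "\<dots> = (\<Sum>j\<in>UNIV. \<Sum>i\<in>UNIV. cnj (u $ i) * A $ i $ j * v $ j)"
    by (rule sum.swap)
  also have "\<dots> = cinner (adj A *v u) v"
    unfolding cinner_def adj_def matrix_vector_mult_def
    by (simp add: sum_distrib_left sum_distrib_right mult.commute mult.left_commute)
  finally show ?thesis .
qed

lemma cinner_sum_right: "cinner u (sum f S) = (\<Sum>x\<in>S. cinner u (f x))"
  by (cases "finite S") (auto simp: cinner_def sum_distrib_left intro: sum.swap)

lemma cinner_unitary:
  assumes "unitary U"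
  shows "cinner (U *v v) (U *v w) = cinner v w"
  using assms by (simp add: cinner_adj unitary_def matrix_vector_mul_assoc)

lemma matrix_vector_mult_scale: "A *v (c *s v) = (c::complex) *s (A *v v)"
  by (simp add: vec_eq_iff matrix_vector_mult_def sum_distrib_left mult.left_commute)

lemma sum_matrix_vector_mult: "sum f S *v v = (\<Sum>x\<in>S. f x *v v)"
  by (cases "finite S")
     (auto simp: vec_eq_iff matrix_vector_mult_def sum_distrib_right intro: sum.swap)

lemma matrix_mult_sum_left: "sum f S ** B = (\<Sum>x\<in>S. f x ** B)"
  by (cases "finite S")
     (auto simp: vec_eq_iff matrix_matrix_mult_def sum_distrib_right intro: sum.swap)

lemma matrix_mult_sum_right: "B ** sum f S = (\<Sum>x\<in>S. B ** f x)"
  by (cases "finite S")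
     (auto simp: vec_eq_iff matrix_matrix_mult_def sum_distrib_left intro: sum.swap)

lemma matrix_mult_diff_left: "(A::'a::ring_1^'n^'m) ** (B - C) = A ** B - A ** C"
  by (simp add: vec_eq_iff matrix_matrix_mult_def sum_subtractf algebra_simps)

lemma matrix_mult_diff_right: "((B::'a::ring_1^'n^'m) - C) ** A = B ** A - C ** A"
  by (simp add: vec_eq_iff matrix_matrix_mult_def sum_subtractf algebra_simps)

lemma adj_sum: "adj (sum f S) = (\<Sum>x\<in>S. adj (f x))"
  by (cases "finite S") (auto simp: vec_eq_iff adj_def)

lemma adj_outer: "adj (outer a b) = outer b a"
  by (simp add: vec_eq_iff outer_def adj_def)

lemma outer_zero_left [simp]: "outer 0 v = 0"
  by (simp add: vec_eq_iff outer_def)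

lemma outer_mult_vector: "outer a b *v v = cinner b v *s a"
  by (simp add: vec_eq_iff outer_def cinner_def matrix_vector_mult_def sum_distrib_left mult_ac)

lemma outer_mult: "outer a b ** outer c d = outer (cinner b c *s a) d"
  by (simp add: vec_eq_iff outer_def cinner_def matrix_matrix_mult_def sum_distrib_left
      sum_distrib_right mult_ac)

lemma outer_mult_matrix: "outer a b ** Z = outer a (adj Z *v b)"
  by (simp add: vec_eq_iff outer_def adj_def matrix_matrix_mult_def matrix_vector_mult_def
      sum_distrib_left mult_ac)

lemma outer_sandwich: "outer a b ** Z ** outer c d = outer (cinner b (Z *v c) *s a) d"
  by (simp add: outer_mult_matrix[of a b] outer_mult cinner_adj)

lemma matrix_mult_outer_adj: "A ** outer u v ** adj B = outer (A *v u) (B *v v)"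
  by (simp add: vec_eq_iff outer_def adj_def matrix_matrix_mult_def matrix_vector_mult_def
      sum_distrib_left sum_distrib_right mult_ac)

lemma outer_scale_right: "outer u (c *s v) = outer (cnj c *s u) v"
  by (simp add: vec_eq_iff outer_def mult_ac)

lemma orthonormal_basisD:
  "orthonormal_basis W \<Longrightarrow> v \<in> W \<Longrightarrow> w \<in> W \<Longrightarrow> cinner v w = (if v = w then 1 else 0)"
  unfolding orthonormal_basis_def by auto

lemma orthonormal_basis_finite: "orthonormal_basis W \<Longrightarrow> finite W"
  unfolding orthonormal_basis_def by auto

text \<open>An orthonormal family of \<open>CARD('n)\<close> vectors is the column set of a matrix \<open>U\<close> with
  \<open>U\<^sup>\<dagger> U = 1\<close>; hence also \<open>U U\<^sup>\<dagger> = 1\<close>, which is the resolution of the identity.\<close>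
lemma sum_outer_orthonormal_basis:
  assumes "orthonormal_basis (W :: (complex^'n) set)"
  shows "(\<Sum>w\<in>W. outer w w) = mat 1"
proof -
  obtain e where e: "bij_betw e (UNIV::'n set) W"
    using assms finite_same_card_bij[of "UNIV::'n set" W] unfolding orthonormal_basis_def by auto
  define U :: "complex^'n^'n" where "U = (\<chi> i k. e k $ i)"
  have "(adj U ** U) $ k $ l = cinner (e k) (e l)" for k l
    by (simp add: U_def adj_def matrix_matrix_mult_def cinner_def)
  also have "cinner (e k) (e l) = (if k = l then 1 else 0)" for k l
    using orthonormal_basisD[OF assms] bij_betw_apply[OF e] bij_betw_imp_inj_on[OF e]
    by (auto dest: inj_onD)
  finally have "adj U ** U = mat 1"
    by (simp add: vec_eq_iff mat_def)
  hence "U ** adj U = mat 1"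
    by (simp add: matrix_left_right_inverse)
  moreover have "U ** adj U = (\<Sum>w\<in>W. outer w w)"
    by (simp add: vec_eq_iff U_def adj_def matrix_matrix_mult_def outer_def
        sum.reindex_bij_betw[OF e, of "\<lambda>w. w $ _ * cnj (w $ _)"])
  ultimately show ?thesis by simp
qed

lemma matrix_outer_expansion:
  assumes "orthonormal_basis W"
  shows "Z = (\<Sum>u\<in>W. \<Sum>v\<in>W. outer (cinner u (Z *v v) *s u) v)"
proof -
  have "Z = (\<Sum>u\<in>W. outer u u) ** Z ** (\<Sum>v\<in>W. outer v v)"
    by (simp add: sum_outer_orthonormal_basis[OF assms])
  also have "\<dots> = (\<Sum>u\<in>W. \<Sum>v\<in>W. outer u u ** Z ** outer v v)"
    by (simp add: matrix_mult_sum_left matrix_mult_sum_right) (rule sum.swap)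
  finally show ?thesis
    by (simp add: outer_sandwich)
qed

lemma adj_proj_onto: "adj (proj_onto A) = proj_onto A"
  by (simp add: proj_onto_def adj_sum adj_outer)

lemma proj_onto_mult_vector:
  assumes "orthonormal_basis W" "A \<subseteq> W" "w \<in> W"
  shows "proj_onto A *v w = (if w \<in> A then w else 0)"
proof -
  have "proj_onto A *v w = (\<Sum>a\<in>A. if a = w then a else 0)"
    using assms orthonormal_basisD[OF assms(1)]
    by (auto simp: proj_onto_def sum_matrix_vector_mult outer_mult_vector intro!: sum.cong)
  thus ?thesis
    using finite_subset[OF assms(2) orthonormal_basis_finite[OF assms(1)]] by simp
qed

lemma proj_onto_mult:
  assumes "orthonormal_basis W" "A \<subseteq> W" "B \<subseteq> W"
  shows "proj_onto A ** proj_onto B = proj_onto (A \<inter> B)"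
proof -
  have fin: "finite A" "finite B"
    using assms finite_subset orthonormal_basis_finite by blast+
  have on: "a \<in> A \<Longrightarrow> b \<in> B \<Longrightarrow> cinner a b = (if a = b then 1 else 0)" for a b
    using assms orthonormal_basisD by blast
  have "proj_onto A ** proj_onto B = (\<Sum>a\<in>A. \<Sum>b\<in>B. outer (cinner a b *s a) b)"
    by (simp add: proj_onto_def matrix_mult_sum_left matrix_mult_sum_right outer_mult) (rule sum.swap)
  also have "\<dots> = (\<Sum>a\<in>A. \<Sum>b\<in>B. if a = b then outer a a else 0)"
    by (intro sum.cong) (auto simp: on)
  also have "\<dots> = (\<Sum>a\<in>A. if a \<in> B then outer a a else 0)"
    using fin by simp
  also have "\<dots> = proj_onto (A \<inter> B)"
    using fin by (simp add: proj_onto_def sum.inter_filter Int_def)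
  finally show ?thesis .
qed

section \<open>The Hilbert--Schmidt projection onto \<open>\<L>\<^sup>D\<close>\<close>

lemma hs_inner_mult_left: "hs_inner (A ** Z) N = hs_inner Z (adj A ** N)"
proof -
  have "hs_inner (A ** Z) N =
      (\<Sum>i\<in>UNIV. \<Sum>j\<in>UNIV. \<Sum>k\<in>UNIV. cnj (A $ i $ k) * cnj (Z $ k $ j) * N $ i $ j)"
    unfolding hs_inner_def matrix_matrix_mult_def by (simp add: sum_distrib_right)
  also have "\<dots> =
      (\<Sum>k\<in>UNIV. \<Sum>j\<in>UNIV. \<Sum>i\<in>UNIV. cnj (A $ i $ k) * cnj (Z $ k $ j) * N $ i $ j)"
    by (subst sum.swap, subst (1 2) sum.swap, rule refl)
  also have "\<dots> = hs_inner Z (adj A ** N)"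
    unfolding hs_inner_def matrix_matrix_mult_def adj_def by (simp add: sum_distrib_left mult_ac)
  finally show ?thesis .
qed

lemma hs_inner_mult_right: "hs_inner (Z ** B) N = hs_inner Z (N ** adj B)"
proof -
  have "hs_inner (Z ** B) N =
      (\<Sum>i\<in>UNIV. \<Sum>j\<in>UNIV. \<Sum>k\<in>UNIV. cnj (Z $ i $ k) * cnj (B $ k $ j) * N $ i $ j)"
    unfolding hs_inner_def matrix_matrix_mult_def by (simp add: sum_distrib_right)
  also have "\<dots> =
      (\<Sum>i\<in>UNIV. \<Sum>k\<in>UNIV. \<Sum>j\<in>UNIV. cnj (Z $ i $ k) * cnj (B $ k $ j) * N $ i $ j)"
    by (subst (2) sum.swap, rule refl)
  also have "\<dots> = hs_inner Z (N ** adj B)"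
    unfolding hs_inner_def matrix_matrix_mult_def adj_def by (simp add: sum_distrib_left mult_ac)
  finally show ?thesis .
qed

lemma hs_inner_sum_left: "finite S \<Longrightarrow> hs_inner (sum f S) N = (\<Sum>x\<in>S. hs_inner (f x) N)"
  by (induction S rule: finite_induct) (simp_all add: hs_inner_def ring_distribs sum.distrib)

lemma hs_inner_diff_right: "hs_inner D (A - B) = hs_inner D A - hs_inner D B"
  by (simp add: hs_inner_def sum_subtractf right_diff_distrib)

lemma hs_inner_self_eq_0:
  assumes "hs_inner D D = 0"
  shows "D = 0"
proof -
  have sq: "cnj z * z = of_real ((cmod z)\<^sup>2)" for z
    by (metis complex_norm_square mult.commute)
  have "hs_inner D D = of_real (\<Sum>i\<in>UNIV. \<Sum>j\<in>UNIV. (cmod (D $ i $ j))\<^sup>2)"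
    unfolding hs_inner_def sq by simp
  hence "(\<Sum>i\<in>UNIV. \<Sum>j\<in>UNIV. (cmod (D $ i $ j))\<^sup>2) = 0"
    using assms by (metis of_real_eq_0_iff)
  thus ?thesis
    by (simp add: sum_nonneg_eq_0_iff sum_nonneg vec_eq_iff)
qed

lemma hs_orth_proj_eqI:
  assumes "\<And>A B. A \<in> L \<Longrightarrow> B \<in> L \<Longrightarrow> A - B \<in> L"
    and "Y \<in> L" and "\<And>Z. Z \<in> L \<Longrightarrow> hs_inner Z (X - Y) = 0"
  shows "hs_orth_proj L X = Y"
  unfolding hs_orth_proj_def
proof (rule the_equality)
  show "Y \<in> L \<and> (\<forall>Z\<in>L. hs_inner Z (X - Y) = 0)"
    using assms(2,3) by blast
next
  fix Y' assume Y': "Y' \<in> L \<and> (\<forall>Z\<in>L. hs_inner Z (X - Y') = 0)"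
  have "hs_inner (Y' - Y) (Y' - Y) = hs_inner (Y' - Y) (X - Y) - hs_inner (Y' - Y) (X - Y')"
    by (simp add: hs_inner_diff_right[symmetric])
  also have "\<dots> = 0"
    using assms Y' by simp
  finally show "Y' = Y"
    using hs_inner_self_eq_0 by force
qed

lemma matrix_mult_sandwich: "A ** (B ** X ** C) ** D = (A ** B) ** X ** (C ** D)"
  by (simp add: matrix_mul_assoc)

lemma L_D_diff:
  assumes "Y \<in> L_D Ws" and "Y' \<in> L_D Ws"
  shows "Y - Y' \<in> L_D Ws"
proof -
  obtain Z Z' where "Y = (\<Sum>A\<in>Ws. Z A)" "Y' = (\<Sum>A\<in>Ws. Z' A)"
    and "\<forall>A\<in>Ws. proj_onto A ** Z A ** proj_onto A = Z A"
    and "\<forall>A\<in>Ws. proj_onto A ** Z' A ** proj_onto A = Z' A"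
    using assms unfolding L_D_def by blast
  hence "Y - Y' = (\<Sum>A\<in>Ws. Z A - Z' A)"
    and "\<forall>A\<in>Ws. proj_onto A ** (Z A - Z' A) ** proj_onto A = Z A - Z' A"
    by (simp_all add: sum_subtractf matrix_mult_diff_left matrix_mult_diff_right)
  thus ?thesis
    unfolding L_D_def by blast
qed

text \<open>The blocks of \<open>L\<^sup>D\<close> are the ranges of the mutually orthogonal projections
  \<open>Y \<mapsto> P\<^sub>A Y P\<^sub>A\<close>, so the projection onto \<open>L\<^sup>D\<close> is their sum.\<close>
lemma hs_orth_proj_L_D:
  assumes W: "orthonormal_basis W" and sub: "\<And>A. A \<in> Ws \<Longrightarrow> A \<subseteq> W"
    and disj: "\<forall>A\<in>Ws. \<forall>B\<in>Ws. A \<noteq> B \<longrightarrow> A \<inter> B = {}" and fin: "finite Ws"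
  shows "hs_orth_proj (L_D Ws) X = (\<Sum>A\<in>Ws. proj_onto A ** X ** proj_onto A)"
proof (rule hs_orth_proj_eqI[OF L_D_diff])
  let ?P = proj_onto
  define Y where "Y = (\<Sum>A\<in>Ws. ?P A ** X ** ?P A)"
  have PP: "?P A ** ?P B = (if A = B then ?P A else 0)" if "A \<in> Ws" "B \<in> Ws" for A B
    using that proj_onto_mult[OF W sub sub] disj by (auto simp: proj_onto_def)
  have PYP: "?P A ** Y ** ?P A = ?P A ** X ** ?P A" if A: "A \<in> Ws" for A
  proof -
    have "?P A ** Y ** ?P A = (\<Sum>B\<in>Ws. (?P A ** ?P B) ** X ** (?P B ** ?P A))"
      by (simp add: Y_def matrix_mult_sum_left matrix_mult_sum_right matrix_mult_sandwich)
    also have "\<dots> = (\<Sum>B\<in>Ws. if B = A then ?P A ** X ** ?P A else 0)"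
      using A PP by (intro sum.cong) auto
    finally show ?thesis
      using fin A by simp
  qed
  show "Y \<in> L_D Ws"
    unfolding L_D_def Y_def using PP by (auto simp: matrix_mult_sandwich)
  show "hs_inner Z (X - Y) = 0" if "Z \<in> L_D Ws" for Z
  proof -
    obtain Z' where Z: "Z = (\<Sum>A\<in>Ws. Z' A)" and Z': "\<And>A. A \<in> Ws \<Longrightarrow> ?P A ** Z' A ** ?P A = Z' A"
      using \<open>Z \<in> L_D Ws\<close> unfolding L_D_def by blast
    have "hs_inner (Z' A) (X - Y) = 0" if A: "A \<in> Ws" for A
    proof -
      have "hs_inner (Z' A) (X - Y) = hs_inner (?P A ** Z' A ** ?P A) (X - Y)"
        using Z' A by simp
      also have "\<dots> = hs_inner (Z' A) (?P A ** ((X - Y) ** ?P A))"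
        by (simp only: hs_inner_mult_right[of "?P A ** Z' A"] hs_inner_mult_left[of "?P A" "Z' A"]
            adj_proj_onto)
      also have "?P A ** ((X - Y) ** ?P A) = ?P A ** X ** ?P A - ?P A ** Y ** ?P A"
        by (simp add: matrix_mult_diff_left matrix_mult_diff_right matrix_mul_assoc)
      finally show ?thesis
        by (simp add: PYP[OF A] hs_inner_def)
    qed
    thus ?thesis
      using fin by (simp add: Z hs_inner_sum_left)
  qed
qed

section \<open>Characters and the normalized Haar measure\<close>

lemma measurable_continuous_map_top_borel:
  assumes "continuous_map X Y f"
    and "sets M = top_borel_sets X" "space M = topspace X"
    and "sets N = top_borel_sets Y"
  shows "f \<in> measurable M N"
proof (rule measurable_sigma_sets)
  show "sets N = sigma_sets (topspace Y) {U. openin Y U}" "{U. openin Y U} \<subseteq> Pow (topspace Y)"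
    using assms(4) openin_subset by (auto simp: top_borel_sets_def)
  show "f \<in> space M \<rightarrow> topspace Y"
    using assms(1,3) by (auto simp: continuous_map)
  show "f -` U \<inter> space M \<in> sets M" if "U \<in> {U. openin Y U}" for U
  proof -
    have "openin X {x \<in> topspace X. f x \<in> U}"
      using assms(1) that by (simp add: continuous_map)
    moreover have "f -` U \<inter> space M = {x \<in> topspace X. f x \<in> U}"
      using assms(3) by auto
    ultimately show ?thesis
      using assms(2) by (auto simp: top_borel_sets_def)
  qed
qed

lemma borel_measurable_continuous_map_top_borel:
  assumes "continuous_map X euclidean f" "sets M = top_borel_sets X" "space M = topspace X"
  shows "f \<in> borel_measurable M"
  using measurable_continuous_map_top_borel[OF assms]
  by (simp add: top_borel_sets_def borel_def)

lemma normalized_haar_left_translation: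
  assumes "compact_group G T" "subgroup H G" "normalized_haar G T H M" "h \<in> H"
  shows "(\<lambda>x. h \<otimes>\<^bsub>G\<^esub> x) \<in> measurable M M" and "distr M M (\<lambda>x. h \<otimes>\<^bsub>G\<^esub> x) = M"
proof -
  interpret group G
    using assms(1) by (simp add: compact_group_def)
  have HG: "H \<subseteq> carrier G"
    using assms(2) by (rule subgroup.subset)
  have mult: "continuous_map (prod_topology T T) T (\<lambda>(x, y). x \<otimes>\<^bsub>G\<^esub> y)"
    and top: "topspace T = carrier G"
    using assms(1) by (auto simp: compact_group_def)
  have M: "space M = H" "sets M = top_borel_sets (subtopology T H)"
    and invariant: "\<And>h A. h \<in> H \<Longrightarrow> A \<in> sets M \<Longrightarrow> emeasure M ((\<lambda>x. h \<otimes>\<^bsub>G\<^esub> x) ` A) = emeasure M A"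
    using assms(3) by (auto simp: normalized_haar_def)
  have "continuous_map T (prod_topology T T) (\<lambda>x. (h, x))"
    using assms(4) HG top by (intro continuous_map_pairedI) auto
  hence "continuous_map T T (\<lambda>x. h \<otimes>\<^bsub>G\<^esub> x)"
    using continuous_map_compose[OF _ mult] by (fastforce simp: o_def)
  hence "continuous_map (subtopology T H) (subtopology T H) (\<lambda>x. h \<otimes>\<^bsub>G\<^esub> x)"
    using assms(2,4) HG top
    by (intro continuous_map_into_subtopology continuous_map_from_subtopology)
       (auto simp: subgroup.m_closed)
  thus meas: "(\<lambda>x. h \<otimes>\<^bsub>G\<^esub> x) \<in> measurable M M"
    using M HG top by (intro measurable_continuous_map_top_borel) auto
  show "distr M M (\<lambda>x. h \<otimes>\<^bsub>G\<^esub> x) = M"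
  proof (rule measure_eqI)
    fix A assume "A \<in> sets (distr M M (\<lambda>x. h \<otimes>\<^bsub>G\<^esub> x))"
    hence A: "A \<in> sets M" by simp
    have AH: "A \<subseteq> H"
      using sets.sets_into_space[OF A] M by simp
    have "(\<lambda>x. h \<otimes>\<^bsub>G\<^esub> x) -` A \<inter> space M = (\<lambda>x. inv\<^bsub>G\<^esub> h \<otimes>\<^bsub>G\<^esub> x) ` A"
    proof (intro equalityI subsetI)
      fix x assume x: "x \<in> (\<lambda>x. h \<otimes>\<^bsub>G\<^esub> x) -` A \<inter> space M"
      hence "x = inv\<^bsub>G\<^esub> h \<otimes>\<^bsub>G\<^esub> (h \<otimes>\<^bsub>G\<^esub> x)"
        using assms(4) HG M by (simp add: m_assoc[symmetric] subsetD)
      thus "x \<in> (\<lambda>x. inv\<^bsub>G\<^esub> h \<otimes>\<^bsub>G\<^esub> x) ` A"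
        using x by blast
    next
      fix x assume "x \<in> (\<lambda>x. inv\<^bsub>G\<^esub> h \<otimes>\<^bsub>G\<^esub> x) ` A"
      then obtain a where a: "a \<in> A" "x = inv\<^bsub>G\<^esub> h \<otimes>\<^bsub>G\<^esub> a" by blast
      hence "x \<in> H" "h \<otimes>\<^bsub>G\<^esub> x = a"
        using assms(2,4) AH HG by (auto simp: subgroup.m_closed subgroup.m_inv_closed
            m_assoc[symmetric] subsetD)
      thus "x \<in> (\<lambda>x. h \<otimes>\<^bsub>G\<^esub> x) -` A \<inter> space M"
        using a M by simp
    qed
    thus "emeasure (distr M M (\<lambda>x. h \<otimes>\<^bsub>G\<^esub> x)) A = emeasure M A"
      using emeasure_distr[OF meas A] invariant[OF subgroup.m_inv_closed[OF assms(2,4)] A] by simp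
  qed simp
qed

lemma integral_normalized_haar_character_eq_0:
  fixes \<psi> :: "'g \<Rightarrow> complex"
  assumes "compact_group G T" "subgroup H G" "normalized_haar G T H M"
    and "\<psi> \<in> borel_measurable M" "h \<in> H"
    and "\<forall>x\<in>H. \<psi> (h \<otimes>\<^bsub>G\<^esub> x) = \<psi> h * \<psi> x" "\<psi> h \<noteq> 1"
  shows "integral\<^sup>L M \<psi> = 0"
proof -
  have "integral\<^sup>L M \<psi> = integral\<^sup>L (distr M M (\<lambda>x. h \<otimes>\<^bsub>G\<^esub> x)) \<psi>"
    using normalized_haar_left_translation[OF assms(1-3,5)] by simp
  also have "\<dots> = integral\<^sup>L M (\<lambda>x. \<psi> (h \<otimes>\<^bsub>G\<^esub> x))"
    using normalized_haar_left_translation[OF assms(1-3,5)] assms(4) by (intro integral_distr)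
  also have "\<dots> = integral\<^sup>L M (\<lambda>x. \<psi> h * \<psi> x)"
    using assms(3,6) by (intro Bochner_Integration.integral_cong) (auto simp: normalized_haar_def)
  also have "\<dots> = \<psi> h * integral\<^sup>L M \<psi>"
    by simp
  finally show ?thesis
    using assms(7) by (metis mult_cancel_right1)
qed

lemma continuous_map_mult [continuous_intros]:
  fixes f g :: "'a \<Rightarrow> 'b::real_normed_algebra"
  shows "continuous_map X euclidean f \<Longrightarrow> continuous_map X euclidean g \<Longrightarrow>
    continuous_map X euclidean (\<lambda>x. f x * g x)"
  by (simp add: continuous_map_atin tendsto_mult)

lemma continuous_map_cnj [continuous_intros]:
  "continuous_map X euclidean f \<Longrightarrow> continuous_map X euclidean (\<lambda>x. cnj (f x))"
  by (simp add: continuous_map_atin tendsto_cnj)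

definition diag_coeff :: "('g \<Rightarrow> complex^'n^'n) \<Rightarrow> complex^'n \<Rightarrow> 'g \<Rightarrow> complex" where
  "diag_coeff R w g = cinner w (R g *v w)"

lemma diag_coeff_eigenvalue:
  assumes "R g *v w = c *s w" "cinner w w = 1"
  shows "diag_coeff R w g = c"
  using assms by (simp add: diag_coeff_def cinner_scale_right)

lemma carries_char_diag_coeff:
  assumes "carries_char R H w c" "cinner w w = 1"
  shows "carries_char R H w (diag_coeff R w)"
  using assms diag_coeff_eigenvalue unfolding carries_char_def by metis

lemma unitary_eigenvalue_norm:
  assumes "unitary U" "U *v w = c *s w" "cinner w w = 1"
  shows "cmod c = 1"
proof -
  have "cinner w w = cinner (U *v w) (U *v w)"
    using cinner_unitary[OF assms(1)] by simp
  also have "\<dots> = c * cnj c * cinner w w"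
    by (simp add: assms(2) cinner_scale_left cinner_scale_right)
  finally have "complex_of_real ((cmod c)\<^sup>2) = 1"
    using assms(3) complex_norm_square[of c] by simp
  hence "(cmod c)\<^sup>2 = 1"
    by (metis of_real_eq_1_iff)
  thus ?thesis
    using norm_ge_zero[of c] by (auto simp: power2_eq_1_iff)
qed

lemma diag_coeff_unimodular:
  assumes "cont_unitary_rep G T R" "subgroup H G" "carries_char R H w c" "cinner w w = 1" "h \<in> H"
  shows "cmod (diag_coeff R w h) = 1"
  using assms carries_char_diag_coeff[OF assms(3,4)] subgroup.subset[OF assms(2)]
  by (intro unitary_eigenvalue_norm[of "R h" w]) (auto simp: cont_unitary_rep_def carries_char_def)

lemma diag_coeff_mult:
  assumes "cont_unitary_rep G T R" "subgroup H G" "carries_char R H w c" "cinner w w = 1"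
    and "x \<in> H" "y \<in> H"
  shows "diag_coeff R w (x \<otimes>\<^bsub>G\<^esub> y) = diag_coeff R w x * diag_coeff R w y"
proof (rule diag_coeff_eigenvalue[OF _ assms(4)])
  have "x \<in> carrier G" "y \<in> carrier G"
    using assms(5,6) subgroup.subset[OF assms(2)] by auto
  hence "R (x \<otimes>\<^bsub>G\<^esub> y) = R x ** R y"
    using assms(1) by (simp add: cont_unitary_rep_def)
  thus "R (x \<otimes>\<^bsub>G\<^esub> y) *v w = (diag_coeff R w x * diag_coeff R w y) *s w"
    using carries_char_diag_coeff[OF assms(3,4)] assms(5,6)
    by (simp add: carries_char_def matrix_vector_mul_assoc[symmetric] matrix_vector_mult_scale
        mult.commute)
qed

lemma continuous_map_diag_coeff:
  assumes "cont_unitary_rep G T R"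
  shows "continuous_map T euclidean (diag_coeff R w)"
proof -
  have "continuous_map T euclidean (\<lambda>g. \<Sum>i\<in>UNIV. cnj (w $ i) * (\<Sum>j\<in>UNIV. R g $ i $ j * w $ j))"
    using assms unfolding cont_unitary_rep_def
    by (intro continuous_map_sum continuous_map_mult continuous_map_canonical_const) auto
  thus ?thesis
    unfolding diag_coeff_def[abs_def] cinner_def matrix_vector_mult_def by simp
qed

lemma integral_diag_coeff_product:
  assumes G: "compact_group G T" and R: "cont_unitary_rep G T R" and H: "subgroup H G"
    and M: "normalized_haar G T H M"
    and u: "carries_char R H u cu" "cinner u u = 1" and v: "carries_char R H v cv" "cinner v v = 1"
  defines "\<psi> \<equiv> \<lambda>h. diag_coeff R u h * cnj (diag_coeff R v h)"
  shows "integrable M \<psi>"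
    and "integral\<^sup>L M \<psi> = (if \<forall>h\<in>H. diag_coeff R u h = diag_coeff R v h then 1 else 0)"
proof -
  let ?\<chi> = "diag_coeff R"
  interpret prob_space M
    using M by (simp add: normalized_haar_def)
  have space: "space M = H"
    using M by (simp add: normalized_haar_def)
  have norm_\<chi>: "cmod (?\<chi> u h) = 1" "cmod (?\<chi> v h) = 1" if "h \<in> H" for h
    using diag_coeff_unimodular[OF R H] u v that by blast+
  have "continuous_map (subtopology T H) euclidean \<psi>"
    unfolding \<psi>_def using continuous_map_diag_coeff[OF R]
    by (intro continuous_map_from_subtopology continuous_intros)
  moreover have "topspace (subtopology T H) = H"
    using G subgroup.subset[OF H] by (auto simp: compact_group_def)
  ultimately have meas: "\<psi> \<in> borel_measurable M"
    using M space by (intro borel_measurable_continuous_map_top_borel) (auto simp: normalized_haar_def)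
  show "integrable M \<psi>"
    using meas norm_\<chi> space by (intro integrable_const_bound[where B = 1]) (auto simp: \<psi>_def norm_mult)
  show "integral\<^sup>L M \<psi> = (if \<forall>h\<in>H. ?\<chi> u h = ?\<chi> v h then 1 else 0)"
  proof (cases "\<forall>h\<in>H. ?\<chi> u h = ?\<chi> v h")
    case True
    have "\<psi> h = 1" if "h \<in> H" for h
      using True that norm_\<chi>(1)[OF that] complex_norm_square[of "?\<chi> u h"] by (simp add: \<psi>_def)
    hence "integral\<^sup>L M \<psi> = integral\<^sup>L M (\<lambda>_. 1)"
      using space by (intro Bochner_Integration.integral_cong) auto
    thus ?thesis
      using True by (simp add: prob_space)
  next
    case False
    then obtain h where h: "h \<in> H" "?\<chi> u h \<noteq> ?\<chi> v h"
      by blast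
    have "cnj (?\<chi> v h) * ?\<chi> v h = 1"
      using norm_\<chi>(2)[OF h(1)] complex_norm_square[of "?\<chi> v h"] by (simp add: mult.commute)
    hence "?\<chi> u h = \<psi> h * ?\<chi> v h"
      by (simp add: \<psi>_def mult.assoc)
    hence "\<psi> h \<noteq> 1"
      using h(2) by auto
    moreover have "\<forall>x\<in>H. \<psi> (h \<otimes>\<^bsub>G\<^esub> x) = \<psi> h * \<psi> x"
      using diag_coeff_mult[OF R H] u v h(1) by (simp add: \<psi>_def)
    ultimately have "integral\<^sup>L M \<psi> = 0"
      using integral_normalized_haar_character_eq_0[OF G H M meas h(1)] by blast
    thus ?thesis
      using False by simp
  qed
qed

lemma T_H_eigenbasis:
  fixes \<gamma> :: "complex^'n \<Rightarrow> 'g \<Rightarrow> complex"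
  assumes W: "orthonormal_basis W"
    and eig: "\<And>w h. w \<in> W \<Longrightarrow> h \<in> space M \<Longrightarrow> R h *v w = \<gamma> w h *s w"
    and int: "\<And>u v. u \<in> W \<Longrightarrow> v \<in> W \<Longrightarrow> integrable M (\<lambda>h. \<gamma> u h * cnj (\<gamma> v h))"
  shows "T_H M R Z = (\<Sum>u\<in>W. \<Sum>v\<in>W.
           outer ((integral\<^sup>L M (\<lambda>h. \<gamma> u h * cnj (\<gamma> v h)) * cinner u (Z *v v)) *s u) v)"
proof -
  have conj: "R h ** Z ** adj (R h) =
      (\<Sum>u\<in>W. \<Sum>v\<in>W. outer ((\<gamma> u h * cnj (\<gamma> v h) * cinner u (Z *v v)) *s u) v)"
    if h: "h \<in> space M" for h
  proof -
    have "R h ** Z ** adj (R h) =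
        R h ** (\<Sum>u\<in>W. \<Sum>v\<in>W. outer (cinner u (Z *v v) *s u) v) ** adj (R h)"
      by (subst (1) matrix_outer_expansion[OF W, of Z]) (rule refl)
    also have "\<dots> = (\<Sum>u\<in>W. \<Sum>v\<in>W. outer (cinner u (Z *v v) *s (R h *v u)) (R h *v v))"
      by (simp add: matrix_mult_sum_left matrix_mult_sum_right matrix_mult_outer_adj
          matrix_vector_mult_scale)
    also have "\<dots> = (\<Sum>u\<in>W. \<Sum>v\<in>W. outer ((\<gamma> u h * cnj (\<gamma> v h) * cinner u (Z *v v)) *s u) v)"
      using eig h by (intro sum.cong refl) (simp add: outer_scale_right vector_smult_assoc mult_ac)
    finally show ?thesis .
  qed
  have "T_H M R Z $ i $ j = (\<Sum>u\<in>W. \<Sum>v\<in>W.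
      integral\<^sup>L M (\<lambda>h. \<gamma> u h * cnj (\<gamma> v h)) * (cinner u (Z *v v) * (u $ i * cnj (v $ j))))"
    for i j
  proof -
    have "T_H M R Z $ i $ j = integral\<^sup>L M (\<lambda>h. \<Sum>u\<in>W. \<Sum>v\<in>W.
        \<gamma> u h * cnj (\<gamma> v h) * (cinner u (Z *v v) * (u $ i * cnj (v $ j))))"
      unfolding T_H_def by (simp add: conj outer_def mult_ac cong: Bochner_Integration.integral_cong)
    also have "\<dots> = (\<Sum>u\<in>W. \<Sum>v\<in>W.
        integral\<^sup>L M (\<lambda>h. \<gamma> u h * cnj (\<gamma> v h)) * (cinner u (Z *v v) * (u $ i * cnj (v $ j))))"
      by (simp add: int)
    finally show ?thesis .
  qed
  thus ?thesis
    by (simp add: vec_eq_iff outer_def mult_ac)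
qed

lemma cinner_block_sandwich:
  assumes W: "orthonormal_basis W" and sub: "\<And>B. B \<in> Ws \<Longrightarrow> B \<subseteq> W"
    and disj: "\<forall>A\<in>Ws. \<forall>B\<in>Ws. A \<noteq> B \<longrightarrow> A \<inter> B = {}" and fin: "finite Ws"
    and A: "A \<in> Ws" "u \<in> A" and v: "v \<in> W"
  shows "cinner u ((\<Sum>B\<in>Ws. proj_onto B ** X ** proj_onto B) *v v) =
    (if v \<in> A then cinner u (X *v v) else 0)"
proof -
  have "cinner u ((proj_onto B ** X ** proj_onto B) *v v) =
      (if B = A then (if v \<in> A then cinner u (X *v v) else 0) else 0)" if B: "B \<in> Ws" for B
  proof -
    have "u \<in> B \<longleftrightarrow> B = A"
      using A B disj by blast
    moreover have "proj_onto B *v u = (if u \<in> B then u else 0)"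
      using A sub by (intro proj_onto_mult_vector[OF W sub[OF B]]) blast
    ultimately have "proj_onto B *v u = (if B = A then u else 0)"
      by simp
    moreover have "proj_onto B *v v = (if v \<in> B then v else 0)"
      using proj_onto_mult_vector[OF W sub[OF B] v] .
    moreover have "cinner u ((proj_onto B ** X ** proj_onto B) *v v) =
        cinner (proj_onto B *v u) (X *v (proj_onto B *v v))"
      by (simp add: matrix_vector_mul_assoc[symmetric] cinner_adj[of u "proj_onto B"] adj_proj_onto)
    ultimately show ?thesis
      by (simp add: cinner_def)
  qed
  thus ?thesis
    using fin A by (simp add: sum_matrix_vector_mult cinner_sum_right)
qed

lemma NDCSE_blocks:
  assumes "NDCSE G R H W Ws"
  shows "orthonormal_basis W" and "\<Union>Ws = W" and "A \<in> Ws \<Longrightarrow> A \<subseteq> W"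
    and "\<forall>A\<in>Ws. \<forall>B\<in>Ws. A \<noteq> B \<longrightarrow> A \<inter> B = {}" and "finite Ws"
proof -
  show W: "orthonormal_basis W" and UW: "\<Union>Ws = W"
    and "\<forall>A\<in>Ws. \<forall>B\<in>Ws. A \<noteq> B \<longrightarrow> A \<inter> B = {}"
    using assms by (simp_all add: NDCSE_def fourier_basis_def)
  show "A \<in> Ws \<Longrightarrow> A \<subseteq> W"
    using UW by blast
  show "finite Ws"
    using finite_UnionD[of Ws] orthonormal_basis_finite[OF W] UW by simp
qed

lemma NDCSE_carries_diag_coeff:
  assumes "NDCSE G R H W Ws" "w \<in> W"
  shows "carries_char R H w (diag_coeff R w)" and "cinner w w = 1"
proof -
  show unit: "cinner w w = 1"
    using orthonormal_basisD[OF NDCSE_blocks(1)[OF assms(1)] assms(2) assms(2)] by simp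
  obtain c where "carries_char R H w c"
    using assms unfolding NDCSE_def by blast
  thus "carries_char R H w (diag_coeff R w)"
    using carries_char_diag_coeff unit by blast
qed

lemma NDCSE_integral_diag_coeff_product:
  assumes "compact_group G T" "cont_unitary_rep G T R" "subgroup H G" "normalized_haar G T H M"
    and NDCSE: "NDCSE G R H W Ws" and A: "A \<in> Ws" "u \<in> A" "v \<in> A"
  shows "integral\<^sup>L M (\<lambda>h. diag_coeff R u h * cnj (diag_coeff R v h)) = (if u = v then 1 else 0)"
proof -
  have "u \<in> W" "v \<in> W"
    using NDCSE_blocks(3)[OF NDCSE A(1)] A by blast+
  note u = NDCSE_carries_diag_coeff[OF NDCSE \<open>u \<in> W\<close>]
  note v = NDCSE_carries_diag_coeff[OF NDCSE \<open>v \<in> W\<close>]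
  have "\<not> (\<forall>h\<in>H. diag_coeff R u h = diag_coeff R v h)" if "u \<noteq> v"
  proof
    assume "\<forall>h\<in>H. diag_coeff R u h = diag_coeff R v h"
    with v(1) have "carries_char R H v (diag_coeff R u)"
      by (simp add: carries_char_def)
    with u(1) show False
      using NDCSE A that unfolding NDCSE_def by blast
  qed
  thus ?thesis
    using integral_diag_coeff_product(2)[OF assms(1-4) u v] by auto
qed

lemma NDCSE_integral_mult_block_coeff:
  assumes "compact_group G T" "cont_unitary_rep G T R" "subgroup H G" "normalized_haar G T H M"
    and NDCSE: "NDCSE G R H W Ws" and u: "u \<in> W" and v: "v \<in> W"
  shows "integral\<^sup>L M (\<lambda>h. diag_coeff R u h * cnj (diag_coeff R v h)) *
      cinner u ((\<Sum>A\<in>Ws. proj_onto A ** X ** proj_onto A) *v v) =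
    (if u = v then cinner u (X *v u) else 0)"
proof -
  obtain A where A: "A \<in> Ws" "u \<in> A"
    using NDCSE_blocks(2)[OF NDCSE] u by blast
  have "cinner u ((\<Sum>A\<in>Ws. proj_onto A ** X ** proj_onto A) *v v) =
      (if v \<in> A then cinner u (X *v v) else 0)"
    using cinner_block_sandwich[OF NDCSE_blocks(1,3-5)[OF NDCSE] A v] .
  moreover have "integral\<^sup>L M (\<lambda>h. diag_coeff R u h * cnj (diag_coeff R v h)) =
      (if u = v then 1 else 0)" if "v \<in> A"
    using NDCSE_integral_diag_coeff_product[OF assms(1-5) A that] .
  ultimately show ?thesis
    using A by auto
qed

theorem lemma2:
  fixes G :: "('g, 'b) monoid_scheme" and T :: "'g topology"
    and R :: "'g \<Rightarrow> complex ^ 'n ^ 'n" and H :: "'g set" and M :: "'g measure"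
    and W :: "(complex ^ 'n) set" and Ws :: "(complex ^ 'n) set set"
  assumes "compact_group G T"
    and "cont_unitary_rep G T R"
    and "subgroup H G" and "closedin T H"
    and "\<forall>x\<in>H. \<forall>y\<in>H. x \<otimes>\<^bsub>G\<^esub> y = y \<otimes>\<^bsub>G\<^esub> x"
    and "normalized_haar G T H M"
    and "NDCSE G R H W Ws"
  shows "\<forall>X. A_W W X = T_H M R (hs_orth_proj (L_D Ws) X)"
proof
  fix X
  let ?I = "\<lambda>u v. integral\<^sup>L M (\<lambda>h. diag_coeff R u h * cnj (diag_coeff R v h))"
  let ?Y = "\<Sum>A\<in>Ws. proj_onto A ** X ** proj_onto A"
  note W = NDCSE_blocks(1)[OF assms(7)]
  note char = NDCSE_carries_diag_coeff[OF assms(7)]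
  have eig: "R h *v w = diag_coeff R w h *s w" if "w \<in> W" "h \<in> space M" for w h
    using char(1)[OF \<open>w \<in> W\<close>] \<open>h \<in> space M\<close> assms(6)
    by (simp add: carries_char_def normalized_haar_def)
  have int: "integrable M (\<lambda>h. diag_coeff R u h * cnj (diag_coeff R v h))"
    if "u \<in> W" "v \<in> W" for u v
    using integral_diag_coeff_product(1)[OF assms(1-3,6) char[OF \<open>u \<in> W\<close>] char[OF \<open>v \<in> W\<close>]] .
  have "T_H M R (hs_orth_proj (L_D Ws) X) = T_H M R ?Y"
    by (simp add: hs_orth_proj_L_D[OF NDCSE_blocks(1,3-5)[OF assms(7)]])
  also have "\<dots> = (\<Sum>u\<in>W. \<Sum>v\<in>W. outer ((?I u v * cinner u (?Y *v v)) *s u) v)"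
    by (rule T_H_eigenbasis[OF W eig int])
  also have "\<dots> = (\<Sum>u\<in>W. \<Sum>v\<in>W. if v = u then outer (cinner u (X *v u) *s u) u else 0)"
    by (intro sum.cong refl) (simp add: NDCSE_integral_mult_block_coeff[OF assms(1-3,6,7)])
  also have "\<dots> = (\<Sum>u\<in>W. outer (cinner u (X *v u) *s u) u)"
    using orthonormal_basis_finite[OF W] by simp
  also have "\<dots> = A_W W X"
    by (simp add: A_W_def vec_eq_iff outer_def mult.assoc)
  finally show "A_W W X = T_H M R (hs_orth_proj (L_D Ws) X)"
    by (rule sym)
qed

end
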